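(* Let $\pi_+,\bar\pi_+\in(0,1)\setminus\{1/2\}$, $\pi_-=1-\pi_+$, $\bar\pi_-=1-\bar\pi_+$, let $\ell:\mathbb R\times\{-1,+1\}\to[0,\infty)$ be a loss, $\ell_\pm(z)=\ell(z,\pm1)$, and let $g:\mathcal X\to\mathbb R$ satisfy $0\le\ell(g(\bm x),y)\le C_\ell$ for all $\bm x\in\mathcal X$, $y\in\{-1,+1\}$. For any finite samples $\{(\bm x_{\mathrm S,i},\bm x'_{\mathrm S,i})\}_{i=1}^{n_{\mathrm S}}$ and $\{(\bm x_{\mathrm D,i},\bm x'_{\mathrm D,i})\}_{i=1}^{n_{\mathrm D}}$ in $\mathcal X\times\mathcal X$, with $\widehat R_{\mathrm{S\text{-}PC}},\widehat R_{\mathrm{D\text{-}PC}},\widehat R^{\bar\pi}_{\mathrm{S\text{-}PC}},\widehat R^{\bar\pi}_{\mathrm{D\text{-}PC}}$ as in the context, we have $$|\widehat R^{\bar\pi}_{\mathrm{S\text{-}PC}}(g)-\widehat R_{\mathrm{S\text{-}PC}}(g)|\le\frac{|\bar\pi_+-\pi_+|C_\ell}{|\bar\pi_+-\bar\pi_-||\pi_+-\pi_-|}\Big\{|2\bar\pi_+\pi_+(\bar\pi_++\pi_+)-\bar\pi_+^2-\bar\pi_+\pi_+-\pi_+^2|+|\bar\pi_+\pi_+(1-\bar\pi_--\pi_-)+\bar\pi_-\pi_-(\bar\pi_++\pi_+)|+|\bar\pi_-\pi_-(1-\bar\pi_+-\pi_+)+\bar\pi_+\pi_+(\bar\pi_-+\pi_-)|+|2\bar\pi_-\pi_-(\bar\pi_-+\pi_-)-\bar\pi_-^2-\bar\pi_-\pi_--\pi_-^2|\Big\},$$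 $$|\widehat R^{\bar\pi}_{\mathrm{D\text{-}PC}}(g)-\widehat R_{\mathrm{D\text{-}PC}}(g)|\le\frac{C_\ell|\bar\pi_+-\pi_+|}{|\bar\pi_+-\bar\pi_-||\pi_+-\pi_-|}\Big\{|(\bar\pi_++\pi_+)(1-\bar\pi_+\pi_+-\bar\pi_-\pi_-)-\bar\pi_+\pi_+|+|\bar\pi_+^2+\pi_+^2-2\bar\pi_+\pi_+(\bar\pi_++\pi_+)-\bar\pi_-\pi_-|+|\bar\pi_-^2+\pi_-^2-2\bar\pi_-\pi_-(\bar\pi_-+\pi_-)-\bar\pi_+\pi_+|+|(\bar\pi_-+\pi_-)(1-\bar\pi_+\pi_+-\bar\pi_-\pi_-)-\bar\pi_-\pi_-|\Big\}.$$
   Context: For $q\in(0,1)\setminus\{1/2\}$, $q_+=q$, $q_-=1-q$, define $\widehat R^{(q)}_{\mathrm{S}}(g)=\frac{1}{(q_+-q_-)n_{\mathrm S}}\sum_{i=1}^{n_{\mathrm S}}[q_+^3\ell_+(g(\bm x_{\mathrm S,i}))-q_+^2q_-\ell_-(g(\bm x_{\mathrm S,i}))+q_+q_-^2\ell_+(g(\bm x'_{\mathrm S,i}))-q_-^3\ell_-(g(\bm x'_{\mathrm S,i}))]$ and $\widehat R^{(q)}_{\mathrm{D}}(g)=\frac{1}{(q_+-q_-)n_{\mathrm D}}\sum_{i=1}^{n_{\mathrm D}}[q_-(q_+^2-q_-)\ell_+(g(\bm x_{\mathrm D,i}))+q_+(q_--q_+^2)\ell_-(g(\bm x_{\mathrm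 D,i}))+q_-(q_-^2-q_+)\ell_+(g(\bm x'_{\mathrm D,i}))+q_+(q_+-q_-^2)\ell_-(g(\bm x'_{\mathrm D,i}))]$. Then $\widehat R_{\mathrm{S\text{-}PC}}=\widehat R^{(\pi_+)}_{\mathrm S}$, $\widehat R_{\mathrm{D\text{-}PC}}=\widehat R^{(\pi_+)}_{\mathrm D}$ (empirical SD-Pcomp risks with the true class prior) and $\widehat R^{\bar\pi}_{\mathrm{S\text{-}PC}}=\widehat R^{(\bar\pi_+)}_{\mathrm S}$, $\widehat R^{\bar\pi}_{\mathrm{D\text{-}PC}}=\widehat R^{(\bar\pi_+)}_{\mathrm D}$ (the same with the class prior replaced by the estimate $\bar\pi_+$). *)

theory Defs
  imports Complex_Main
begin

text \<open>Samples are indexed by \<open>i < n\<close> (i.e. i = 1..n shifted to 0..n-1).\<close>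

definition lplus :: "(real \<Rightarrow> int \<Rightarrow> real) \<Rightarrow> real \<Rightarrow> real" where
  "lplus l z = l z 1"

definition lminus :: "(real \<Rightarrow> int \<Rightarrow> real) \<Rightarrow> real \<Rightarrow> real" where
  "lminus l z = l z (-1)"

definition RS_hat :: "real \<Rightarrow> (real \<Rightarrow> int \<Rightarrow> real) \<Rightarrow> ('x \<Rightarrow> real) \<Rightarrow> nat
    \<Rightarrow> (nat \<Rightarrow> 'x) \<Rightarrow> (nat \<Rightarrow> 'x) \<Rightarrow> real" where
  "RS_hat q l g n xs xs' =
     (let qp = q; qm = 1 - q in
      1 / ((qp - qm) * real n) *
      (\<Sum>i<n. qp^3 * lplus l (g (xs i)) - qp^2 * qm * lminus l (g (xs i))
             + qp * qm^2 * lplus l (g (xs' i)) - qm^3 * lminus l (g (xs' i))))"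

definition RD_hat :: "real \<Rightarrow> (real \<Rightarrow> int \<Rightarrow> real) \<Rightarrow> ('x \<Rightarrow> real) \<Rightarrow> nat
    \<Rightarrow> (nat \<Rightarrow> 'x) \<Rightarrow> (nat \<Rightarrow> 'x) \<Rightarrow> real" where
  "RD_hat q l g n xd xd' =
     (let qp = q; qm = 1 - q in
      1 / ((qp - qm) * real n) *
      (\<Sum>i<n. qm * (qp^2 - qm) * lplus l (g (xd i)) + qp * (qm - qp^2) * lminus l (g (xd i))
             + qm * (qm^2 - qp) * lplus l (g (xd' i)) + qp * (qp - qm^2) * lminus l (g (xd' i))))"

end

theory Submission
  imports Defs
begin

text \<open>Both empirical risks are averages of the four loss terms
  \<open>\<ell>\<^sub>+(g x), \<ell>\<^sub>-(g x), \<ell>\<^sub>+(g x'), \<ell>\<^sub>-(g x')\<close>, weighted by \<open>N(q) / (q - (1 - q))\<close> for cubic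
  polynomials \<open>N\<close> of the class prior \<open>q\<close>. As the losses lie in \<open>[0, C]\<close>, replacing the prior
  \<open>p\<close> by \<open>b\<close> moves a risk by at most \<open>C\<close> times the total change of its weights, and the
  numerator of \<open>N(b) / (b - (1 - b)) - N(p) / (p - (1 - p))\<close> is divisible by \<open>b - p\<close>; the
  cofactors are the terms in the two bounds.\<close>

lemma abs_mean_le:
  fixes f :: "nat \<Rightarrow> real"
  assumes "\<And>i. i < n \<Longrightarrow> \<bar>f i\<bar> \<le> B" and "0 \<le> B"
  shows "\<bar>1 / real n * (\<Sum>i<n. f i)\<bar> \<le> B"
proof (cases "n = 0")
  case True
  then show ?thesis using assms(2) by simp
next
  case False
  have "\<bar>\<Sum>i<n. f i\<bar> \<le> (\<Sum>i<n. \<bar>f i\<bar>)" by (rule sum_abs)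
  also have "\<dots> \<le> real n * B"
    using sum_bounded_above[of "{..<n}" "\<lambda>i. \<bar>f i\<bar>" B] assms(1) by simp
  finally show ?thesis using False by (simp add: abs_mult field_simps)
qed

lemma abs_weighted_sum4_le:
  fixes x1 x2 x3 x4 :: real
  assumes "0 \<le> x1" "x1 \<le> C" "0 \<le> x2" "x2 \<le> C" "0 \<le> x3" "x3 \<le> C" "0 \<le> x4" "x4 \<le> C"
  shows "\<bar>a1 * x1 + a2 * x2 + a3 * x3 + a4 * x4\<bar> \<le> C * (\<bar>a1\<bar> + \<bar>a2\<bar> + \<bar>a3\<bar> + \<bar>a4\<bar>)"
proof -
  have term_le: "\<bar>a * x\<bar> \<le> \<bar>a\<bar> * C" if "0 \<le> x" "x \<le> C" for a x :: real
    using that by (simp add: abs_mult mult_left_mono)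
  have "\<bar>a1 * x1 + a2 * x2 + a3 * x3 + a4 * x4\<bar>
      \<le> \<bar>a1 * x1\<bar> + \<bar>a2 * x2\<bar> + \<bar>a3 * x3\<bar> + \<bar>a4 * x4\<bar>" by linarith
  also have "\<dots> \<le> \<bar>a1\<bar> * C + \<bar>a2\<bar> * C + \<bar>a3\<bar> * C + \<bar>a4\<bar> * C"
    using term_le[OF assms(1,2), of a1] term_le[OF assms(3,4), of a2]
      term_le[OF assms(5,6), of a3] term_le[OF assms(7,8), of a4] by linarith
  finally show ?thesis by (simp add: algebra_simps)
qed

definition pair_risk :: "real \<Rightarrow> real \<Rightarrow> real \<Rightarrow> real \<Rightarrow> (real \<Rightarrow> int \<Rightarrow> real) \<Rightarrow> ('x \<Rightarrow> real)
    \<Rightarrow> nat \<Rightarrow> (nat \<Rightarrow> 'x) \<Rightarrow> (nat \<Rightarrow> 'x) \<Rightarrow> real" where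
  "pair_risk a1 a2 a3 a4 l g n x x' =
     1 / real n * (\<Sum>i<n. a1 * lplus l (g (x i)) + a2 * lminus l (g (x i))
                        + a3 * lplus l (g (x' i)) + a4 * lminus l (g (x' i)))"

lemma pair_risk_diff:
  "pair_risk a1 a2 a3 a4 l g n x x' - pair_risk b1 b2 b3 b4 l g n x x'
     = pair_risk (a1 - b1) (a2 - b2) (a3 - b3) (a4 - b4) l g n x x'"
  unfolding pair_risk_def right_diff_distrib[symmetric] sum_subtractf[symmetric]
  by (simp add: algebra_simps)

lemma abs_pair_risk_le:
  assumes bound: "\<And>x y. y \<in> {-1, 1} \<Longrightarrow> 0 \<le> l (g x) y \<and> l (g x) y \<le> C"
  shows "\<bar>pair_risk a1 a2 a3 a4 l g n x x'\<bar> \<le> C * (\<bar>a1\<bar> + \<bar>a2\<bar> + \<bar>a3\<bar> + \<bar>a4\<bar>)"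
proof -
  have lplus: "0 \<le> lplus l (g z) \<and> lplus l (g z) \<le> C" for z
    using bound unfolding lplus_def by simp
  have lminus: "0 \<le> lminus l (g z) \<and> lminus l (g z) \<le> C" for z
    using bound unfolding lminus_def by simp
  have "0 \<le> C" using lplus by (meson order_trans)
  then show ?thesis
    unfolding pair_risk_def
    by (intro abs_mean_le abs_weighted_sum4_le) (use lplus lminus in auto)
qed

lemma abs_diff_div_prior_gap:
  fixes b p s T :: real
  assumes "b \<noteq> 1/2" "p \<noteq> 1/2"
    and "N b * (p - (1 - p)) - N p * (b - (1 - b)) = s * (b - p) * T" and "\<bar>s\<bar> = 1"
  shows "\<bar>N b / (b - (1 - b)) - N p / (p - (1 - p))\<bar>
    = \<bar>b - p\<bar> / (\<bar>b - (1 - b)\<bar> * \<bar>p - (1 - p)\<bar>) * \<bar>T\<bar>"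
  using assms by (simp add: diff_frac_eq abs_mult abs_divide)

lemma RS_hat_eq_pair_risk:
  "RS_hat q l g n x x' = pair_risk
     (q^3 / (q - (1 - q))) (- (q^2 * (1 - q)) / (q - (1 - q)))
     (q * (1 - q)^2 / (q - (1 - q))) (- ((1 - q)^3) / (q - (1 - q))) l g n x x'"
  unfolding RS_hat_def pair_risk_def Let_def
  by (simp add: sum_distrib_left diff_divide_distrib add_divide_distrib mult.commute mult.left_commute)

lemma RD_hat_eq_pair_risk:
  "RD_hat q l g n x x' = pair_risk
     ((1 - q) * (q^2 - (1 - q)) / (q - (1 - q))) (q * ((1 - q) - q^2) / (q - (1 - q)))
     ((1 - q) * ((1 - q)^2 - q) / (q - (1 - q))) (q * (q - (1 - q)^2) / (q - (1 - q))) l g n x x'"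
  unfolding RD_hat_def pair_risk_def Let_def
  by (simp add: sum_distrib_left diff_divide_distrib add_divide_distrib mult.commute mult.left_commute)

lemma abs_RS_hat_diff_le:
  fixes b p C :: real
  assumes b: "b \<noteq> 1/2" and p: "p \<noteq> 1/2" and bm: "bm = 1 - b" and pm: "pm = 1 - p"
    and bound: "\<And>x y. y \<in> {-1, 1} \<Longrightarrow> 0 \<le> l (g x) y \<and> l (g x) y \<le> C"
  shows "\<bar>RS_hat b l g n x x' - RS_hat p l g n x x'\<bar>
    \<le> \<bar>b - p\<bar> * C / (\<bar>b - bm\<bar> * \<bar>p - pm\<bar>) *
       (\<bar>2 * b * p * (b + p) - b^2 - b * p - p^2\<bar>
        + \<bar>b * p * (1 - bm - pm) + bm * pm * (b + p)\<bar>
        + \<bar>bm * pm * (1 - b - p) + b * p * (bm + pm)\<bar>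
        + \<bar>2 * bm * pm * (bm + pm) - bm^2 - bm * pm - pm^2\<bar>)"
proof -
  define K where "K = \<bar>b - p\<bar> / (\<bar>b - bm\<bar> * \<bar>p - pm\<bar>)"
  have w1: "\<bar>b^3 / (b - (1 - b)) - p^3 / (p - (1 - p))\<bar>
      = K * \<bar>2 * b * p * (b + p) - b^2 - b * p - p^2\<bar>"
    unfolding K_def bm pm
    by (rule abs_diff_div_prior_gap[OF b p, where N = "\<lambda>q. q^3" and s = 1])
       (simp_all add: algebra_simps power2_eq_square power3_eq_cube)
  have w2: "\<bar>- (b^2 * (1 - b)) / (b - (1 - b)) - - (p^2 * (1 - p)) / (p - (1 - p))\<bar>
      = K * \<bar>b * p * (1 - bm - pm) + bm * pm * (b + p)\<bar>"
    unfolding K_def bm pm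
    by (rule abs_diff_div_prior_gap[OF b p, where N = "\<lambda>q. - (q^2 * (1 - q))" and s = 1])
       (simp_all add: algebra_simps power2_eq_square power3_eq_cube)
  have w3: "\<bar>b * (1 - b)^2 / (b - (1 - b)) - p * (1 - p)^2 / (p - (1 - p))\<bar>
      = K * \<bar>bm * pm * (1 - b - p) + b * p * (bm + pm)\<bar>"
    unfolding K_def bm pm
    by (rule abs_diff_div_prior_gap[OF b p, where N = "\<lambda>q. q * (1 - q)^2" and s = "-1"])
       (simp_all add: algebra_simps power2_eq_square power3_eq_cube)
  have w4: "\<bar>- ((1 - b)^3) / (b - (1 - b)) - - ((1 - p)^3) / (p - (1 - p))\<bar>
      = K * \<bar>2 * bm * pm * (bm + pm) - bm^2 - bm * pm - pm^2\<bar>"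
    unfolding K_def bm pm
    by (rule abs_diff_div_prior_gap[OF b p, where N = "\<lambda>q. - ((1 - q)^3)" and s = "-1"])
       (simp_all add: algebra_simps power2_eq_square power3_eq_cube)
  have "\<bar>RS_hat b l g n x x' - RS_hat p l g n x x'\<bar>
    \<le> C * (\<bar>b^3 / (b - (1 - b)) - p^3 / (p - (1 - p))\<bar>
      + \<bar>- (b^2 * (1 - b)) / (b - (1 - b)) - - (p^2 * (1 - p)) / (p - (1 - p))\<bar>
      + \<bar>b * (1 - b)^2 / (b - (1 - b)) - p * (1 - p)^2 / (p - (1 - p))\<bar>
      + \<bar>- ((1 - b)^3) / (b - (1 - b)) - - ((1 - p)^3) / (p - (1 - p))\<bar>)"
    unfolding RS_hat_eq_pair_risk pair_risk_diff using bound by (rule abs_pair_risk_le)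
  then show ?thesis unfolding w1 w2 w3 w4 K_def by (simp add: algebra_simps)
qed

lemma abs_RD_hat_diff_le:
  fixes b p C :: real
  assumes b: "b \<noteq> 1/2" and p: "p \<noteq> 1/2" and bm: "bm = 1 - b" and pm: "pm = 1 - p"
    and bound: "\<And>x y. y \<in> {-1, 1} \<Longrightarrow> 0 \<le> l (g x) y \<and> l (g x) y \<le> C"
  shows "\<bar>RD_hat b l g n x x' - RD_hat p l g n x x'\<bar>
    \<le> C * \<bar>b - p\<bar> / (\<bar>b - bm\<bar> * \<bar>p - pm\<bar>) *
       (\<bar>(b + p) * (1 - b * p - bm * pm) - b * p\<bar>
        + \<bar>b^2 + p^2 - 2 * b * p * (b + p) - bm * pm\<bar>
        + \<bar>bm^2 + pm^2 - 2 * bm * pm * (bm + pm) - b * p\<bar>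
        + \<bar>(bm + pm) * (1 - b * p - bm * pm) - bm * pm\<bar>)"
proof -
  define K where "K = \<bar>b - p\<bar> / (\<bar>b - bm\<bar> * \<bar>p - pm\<bar>)"
  have w1: "\<bar>(1 - b) * (b^2 - (1 - b)) / (b - (1 - b)) - (1 - p) * (p^2 - (1 - p)) / (p - (1 - p))\<bar>
      = K * \<bar>(b + p) * (1 - b * p - bm * pm) - b * p\<bar>"
    unfolding K_def bm pm
    by (rule abs_diff_div_prior_gap[OF b p, where N = "\<lambda>q. (1 - q) * (q^2 - (1 - q))" and s = 1])
       (simp_all add: algebra_simps power2_eq_square power3_eq_cube)
  have w2: "\<bar>b * ((1 - b) - b^2) / (b - (1 - b)) - p * ((1 - p) - p^2) / (p - (1 - p))\<bar>
      = K * \<bar>b^2 + p^2 - 2 * b * p * (b + p) - bm * pm\<bar>"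
    unfolding K_def bm pm
    by (rule abs_diff_div_prior_gap[OF b p, where N = "\<lambda>q. q * ((1 - q) - q^2)" and s = 1])
       (simp_all add: algebra_simps power2_eq_square power3_eq_cube)
  have w3: "\<bar>(1 - b) * ((1 - b)^2 - b) / (b - (1 - b)) - (1 - p) * ((1 - p)^2 - p) / (p - (1 - p))\<bar>
      = K * \<bar>bm^2 + pm^2 - 2 * bm * pm * (bm + pm) - b * p\<bar>"
    unfolding K_def bm pm
    by (rule abs_diff_div_prior_gap[OF b p, where N = "\<lambda>q. (1 - q) * ((1 - q)^2 - q)" and s = "-1"])
       (simp_all add: algebra_simps power2_eq_square power3_eq_cube)
  have w4: "\<bar>b * (b - (1 - b)^2) / (b - (1 - b)) - p * (p - (1 - p)^2) / (p - (1 - p))\<bar>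
      = K * \<bar>(bm + pm) * (1 - b * p - bm * pm) - bm * pm\<bar>"
    unfolding K_def bm pm
    by (rule abs_diff_div_prior_gap[OF b p, where N = "\<lambda>q. q * (q - (1 - q)^2)" and s = "-1"])
       (simp_all add: algebra_simps power2_eq_square power3_eq_cube)
  have "\<bar>RD_hat b l g n x x' - RD_hat p l g n x x'\<bar>
    \<le> C * (\<bar>(1 - b) * (b^2 - (1 - b)) / (b - (1 - b)) - (1 - p) * (p^2 - (1 - p)) / (p - (1 - p))\<bar>
      + \<bar>b * ((1 - b) - b^2) / (b - (1 - b)) - p * ((1 - p) - p^2) / (p - (1 - p))\<bar>
      + \<bar>(1 - b) * ((1 - b)^2 - b) / (b - (1 - b)) - (1 - p) * ((1 - p)^2 - p) / (p - (1 - p))\<bar>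
      + \<bar>b * (b - (1 - b)^2) / (b - (1 - b)) - p * (p - (1 - p)^2) / (p - (1 - p))\<bar>)"
    unfolding RD_hat_eq_pair_risk pair_risk_diff using bound by (rule abs_pair_risk_le)
  then show ?thesis unfolding w1 w2 w3 w4 K_def by (simp add: algebra_simps)
qed

theorem lemmaA8:
  fixes pp pb C :: real and l :: "real \<Rightarrow> int \<Rightarrow> real" and g :: "'x \<Rightarrow> real"
    and nS nD :: nat and xS xS' xD xD' :: "nat \<Rightarrow> 'x"
  assumes pp: "0 < pp" "pp < 1" "pp \<noteq> 1/2"
    and pb: "0 < pb" "pb < 1" "pb \<noteq> 1/2"
    and loss_nonneg: "\<And>z y. y \<in> {-1, 1} \<Longrightarrow> 0 \<le> l z y"
    and bound: "\<And>x y. y \<in> {-1, 1} \<Longrightarrow> 0 \<le> l (g x) y \<and> l (g x) y \<le> C"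
  shows "let pm = 1 - pp; bm = 1 - pb in
    \<bar>RS_hat pb l g nS xS xS' - RS_hat pp l g nS xS xS'\<bar>
      \<le> \<bar>pb - pp\<bar> * C / (\<bar>pb - bm\<bar> * \<bar>pp - pm\<bar>) *
         (\<bar>2 * pb * pp * (pb + pp) - pb^2 - pb * pp - pp^2\<bar>
          + \<bar>pb * pp * (1 - bm - pm) + bm * pm * (pb + pp)\<bar>
          + \<bar>bm * pm * (1 - pb - pp) + pb * pp * (bm + pm)\<bar>
          + \<bar>2 * bm * pm * (bm + pm) - bm^2 - bm * pm - pm^2\<bar>)
    \<and>
    \<bar>RD_hat pb l g nD xD xD' - RD_hat pp l g nD xD xD'\<bar>
      \<le> C * \<bar>pb - pp\<bar> / (\<bar>pb - bm\<bar> * \<bar>pp - pm\<bar>) *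
         (\<bar>(pb + pp) * (1 - pb * pp - bm * pm) - pb * pp\<bar>
          + \<bar>pb^2 + pp^2 - 2 * pb * pp * (pb + pp) - bm * pm\<bar>
          + \<bar>bm^2 + pm^2 - 2 * bm * pm * (bm + pm) - pb * pp\<bar>
          + \<bar>(bm + pm) * (1 - pb * pp - bm * pm) - bm * pm\<bar>)"
  unfolding Let_def
  using abs_RS_hat_diff_le[where l = l and g = g, OF pb(3) pp(3) refl refl bound]
    abs_RD_hat_diff_le[where l = l and g = g, OF pb(3) pp(3) refl refl bound]
  by (rule conjI)

end
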